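(* Let $\mathcal{G}$ be a MAG on vertex set $V$ and $W\subseteq V$. Then $\mathcal{S}(\mathcal{G}_W)\subseteq\mathcal{S}(\mathcal{G})\cap\mathcal{P}(W)$, where $\mathcal{P}(W)$ is the power set of $W$.
   Context: A MAG is an acyclic directed mixed graph (directed and bidirected edges, no directed cycles) with $\mathrm{sib}(v)\cap\mathrm{an}(v)=\emptyset$ for all $v$ and in which every nonadjacent pair is m-separated by some set; induced subgraphs $\mathcal{G}_W$ of MAGs are MAGs. For a MAG $\mathcal{G}$: $\mathrm{barren}(U)=\{u\in U:\mathrm{de}(u)\cap U=\{u\}\}$; a nonempty $H$ is a head if $\mathrm{barren}(H)=H$ and $H$ lies in a single district (bidirected-connected component) of $\mathcal{G}_{\mathrm{an}(H)}$; $\mathrm{tail}(H)=(\mathrm{dis}_{\mathrm{an}(H)}(H)\setminus H)\cup\mathrm{pa}(\mathrm{dis}_{\mathrm{an}(H)}(H))$; the parametrizing sets are $\mathcal{S}(\mathcal{G})=\{H\cup A:H\text{ a head},A\subseteq\mathrm{tail}(H)\}$. $\mathcal{S}(\mathcal{G}_W)$ is the same construction applied to the MAG $\mathcal{G}_W$. *)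

theory Defs
  imports Main
begin

text \<open>Mixed graphs: a vertex set, directed edges (u,v) meaning u -> v,
  and bidirected edges (u,v) meaning u <-> v (stored symmetrically).\<close>

record 'a mgraph =
  verts :: "'a set"
  dir   :: "('a \<times> 'a) set"
  bi    :: "('a \<times> 'a) set"

definition anc :: "'a mgraph \<Rightarrow> 'a set \<Rightarrow> 'a set" where
  "anc G A = {u \<in> verts G. \<exists>a\<in>A. (u, a) \<in> (dir G)\<^sup>*}"

definition desc :: "'a mgraph \<Rightarrow> 'a set \<Rightarrow> 'a set" where
  "desc G A = {d \<in> verts G. \<exists>a\<in>A. (a, d) \<in> (dir G)\<^sup>*}"

definition sib :: "'a mgraph \<Rightarrow> 'a \<Rightarrow> 'a set" where
  "sib G v = {u. (u, v) \<in> bi G}"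

definition pa :: "'a mgraph \<Rightarrow> 'a set \<Rightarrow> 'a set" where
  "pa G A = {u. \<exists>a\<in>A. (u, a) \<in> dir G}"

definition induced :: "'a mgraph \<Rightarrow> 'a set \<Rightarrow> 'a mgraph" where
  "induced G W = \<lparr>verts = verts G \<inter> W, dir = dir G \<inter> (W \<times> W), bi = bi G \<inter> (W \<times> W)\<rparr>"

definition adjacent :: "'a mgraph \<Rightarrow> 'a \<Rightarrow> 'a \<Rightarrow> bool" where
  "adjacent G u v \<longleftrightarrow> (u, v) \<in> dir G \<or> (v, u) \<in> dir G \<or> (u, v) \<in> bi G \<or> (v, u) \<in> bi G"

definition arrowhead :: "'a mgraph \<Rightarrow> 'a \<Rightarrow> 'a \<Rightarrow> bool" where
  "arrowhead G u v \<longleftrightarrow> (u, v) \<in> dir G \<or> (u, v) \<in> bi G \<or> (v, u) \<in> bi G"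

definition collider :: "'a mgraph \<Rightarrow> 'a list \<Rightarrow> nat \<Rightarrow> bool" where
  "collider G p i \<longleftrightarrow> arrowhead G (p ! (i - 1)) (p ! i) \<and> arrowhead G (p ! Suc i) (p ! i)"

definition m_connecting :: "'a mgraph \<Rightarrow> 'a set \<Rightarrow> 'a \<Rightarrow> 'a \<Rightarrow> 'a list \<Rightarrow> bool" where
  "m_connecting G Z x y p \<longleftrightarrow>
     p \<noteq> [] \<and> hd p = x \<and> last p = y \<and> distinct p \<and> set p \<subseteq> verts G \<and>
     (\<forall>i. Suc i < length p \<longrightarrow> adjacent G (p ! i) (p ! Suc i)) \<and>
     (\<forall>i. 0 < i \<and> Suc i < length p \<longrightarrow>
        (collider G p i \<longrightarrow> p ! i \<in> anc G Z) \<and>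
        (\<not> collider G p i \<longrightarrow> p ! i \<notin> Z))"

definition m_separated :: "'a mgraph \<Rightarrow> 'a \<Rightarrow> 'a \<Rightarrow> 'a set \<Rightarrow> bool" where
  "m_separated G x y Z \<longleftrightarrow> \<not> (\<exists>p. m_connecting G Z x y p)"

definition is_MAG :: "'a mgraph \<Rightarrow> bool" where
  "is_MAG G \<longleftrightarrow>
     finite (verts G) \<and> dir G \<subseteq> verts G \<times> verts G \<and> bi G \<subseteq> verts G \<times> verts G \<and>
     sym (bi G) \<and> acyclic (dir G) \<and>
     (\<forall>v\<in>verts G. sib G v \<inter> anc G {v} = {}) \<and>
     (\<forall>x\<in>verts G. \<forall>y\<in>verts G. x \<noteq> y \<and> \<not> adjacent G x y \<longrightarrow>
        (\<exists>Z. Z \<subseteq> verts G - {x, y} \<and> m_separated G x y Z))"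

definition barren :: "'a mgraph \<Rightarrow> 'a set \<Rightarrow> 'a set" where
  "barren G U = {u \<in> U. desc G {u} \<inter> U = {u}}"

definition district :: "'a mgraph \<Rightarrow> 'a \<Rightarrow> 'a set" where
  "district G v = {w \<in> verts G. v \<in> verts G \<and> (v, w) \<in> (bi G)\<^sup>*}"

definition dis_an :: "'a mgraph \<Rightarrow> 'a set \<Rightarrow> 'a set" where
  "dis_an G H = (\<Union>h\<in>H. district (induced G (anc G H)) h)"

definition is_head :: "'a mgraph \<Rightarrow> 'a set \<Rightarrow> bool" where
  "is_head G H \<longleftrightarrow> H \<noteq> {} \<and> H \<subseteq> verts G \<and> barren G H = H \<and>
     (\<exists>v. H \<subseteq> district (induced G (anc G H)) v)"

definition tail :: "'a mgraph \<Rightarrow> 'a set \<Rightarrow> 'a set" where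
  "tail G H = (dis_an G H - H) \<union> pa G (dis_an G H)"

definition param_sets :: "'a mgraph \<Rightarrow> 'a set set" where
  "param_sets G = {H \<union> A | H A. is_head G H \<and> A \<subseteq> tail G H}"

end

theory Submission
  imports Defs
begin

text \<open>For a finite acyclic graph with symmetric bidirected edges, a set \<open>S\<close> is parametrizing
  exactly when it is nonempty and contained in \<open>D \<union> pa(D)\<close> for some district \<open>D\<close> of the
  subgraph induced by \<open>an(S)\<close>. In the converse direction the head is recovered as
  \<open>barren(S)\<close>: it has the same ancestors as \<open>S\<close>, and no element of it is a parent of an
  ancestor of \<open>S\<close>, so it lies in \<open>D\<close>. This covering condition passes from \<open>G\<^sub>W\<close> to \<open>G\<close>,
  since ancestors, districts and parents computed in \<open>G\<^sub>W\<close> are contained in those computed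
  in \<open>G\<close>.\<close>

lemma induced_induced: "induced (induced G W) X = induced G (W \<inter> X)"
  unfolding induced_def by auto

lemma sym_bi_induced: "sym (bi G) \<Longrightarrow> sym (bi (induced G X))"
  unfolding induced_def sym_def by auto

lemma anc_mono: "A \<subseteq> B \<Longrightarrow> anc G A \<subseteq> anc G B"
  unfolding anc_def by auto

lemma anc_induced_subset: "anc (induced G W) A \<subseteq> anc G A"
proof -
  have "(dir G \<inter> W \<times> W)\<^sup>* \<subseteq> (dir G)\<^sup>*"
    by (rule rtrancl_mono) auto
  then show ?thesis
    unfolding anc_def induced_def by auto
qed

lemma pa_mono: "A \<subseteq> B \<Longrightarrow> pa G A \<subseteq> pa G B"
  unfolding pa_def by auto

lemma pa_induced_subset: "pa (induced G W) A \<subseteq> pa G A"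
  unfolding pa_def induced_def by auto

lemma verts_induced [simp]: "verts (induced G W) = verts G \<inter> W"
  unfolding induced_def by simp

lemma dir_induced [simp]: "dir (induced G W) = dir G \<inter> W \<times> W"
  unfolding induced_def by simp

lemma district_subset_verts: "district G v \<subseteq> verts G"
  unfolding district_def by auto

lemma district_induced_mono:
  assumes "X \<subseteq> Y"
  shows "district (induced G X) v \<subseteq> district (induced G Y) v"
proof -
  have "(bi G \<inter> X \<times> X)\<^sup>* \<subseteq> (bi G \<inter> Y \<times> Y)\<^sup>*"
    using assms by (intro rtrancl_mono) auto
  then show ?thesis
    using assms unfolding district_def induced_def by auto
qed

lemma district_eq_if_mem:
  assumes "sym (bi G)" and "h \<in> district G v"
  shows "district G h = district G v"
proof -
  have v: "v \<in> verts G" and h: "h \<in> verts G" and vh: "(v, h) \<in> (bi G)\<^sup>*"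
    using assms(2) unfolding district_def by auto
  have hv: "(h, v) \<in> (bi G)\<^sup>*"
    using vh assms(1) by (metis rtrancl_converseI sym_conv_converse_eq)
  show ?thesis
    unfolding district_def using v h vh hv by (auto intro: rtrancl_trans)
qed

lemma dis_an_eq_district:
  assumes "sym (bi G)" and "H \<noteq> {}" and "H \<subseteq> district (induced G (anc G H)) v"
  shows "dis_an G H = district (induced G (anc G H)) v"
proof -
  have "district (induced G (anc G H)) h = district (induced G (anc G H)) v" if "h \<in> H" for h
    using that assms(3) district_eq_if_mem[OF sym_bi_induced[OF assms(1)]] by blast
  then show ?thesis
    using assms(2) unfolding dis_an_def by auto
qed

lemma barren_subset: "barren G U \<subseteq> U"
  unfolding barren_def by auto

lemma barren_barren: "barren G (barren G U) = barren G U"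
  unfolding barren_def by blast

lemma exists_barren_descendant:
  assumes "finite (dir G)" and "acyclic (dir G)" and "S \<subseteq> verts G" and "s \<in> S"
  shows "\<exists>z\<in>barren G S. (s, z) \<in> (dir G)\<^sup>*"
proof -
  have "wf (((dir G)\<inverse>)\<^sup>+)"
    using finite_acyclic_wf_converse[OF assms(1,2)] by (rule wf_trancl)
  moreover have "s \<in> {x \<in> S. (s, x) \<in> (dir G)\<^sup>*}"
    using assms(4) by auto
  ultimately obtain z where z: "z \<in> S" "(s, z) \<in> (dir G)\<^sup>*"
    and maximal: "\<And>y. (y, z) \<in> ((dir G)\<inverse>)\<^sup>+ \<Longrightarrow> y \<notin> {x \<in> S. (s, x) \<in> (dir G)\<^sup>*}"
    unfolding wf_eq_minimal by (metis (no_types, lifting) mem_Collect_eq)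
  have "y = z" if "y \<in> S" and zy: "(z, y) \<in> (dir G)\<^sup>*" for y
  proof (rule ccontr)
    assume "y \<noteq> z"
    then have "(y, z) \<in> ((dir G)\<inverse>)\<^sup>+"
      using zy by (auto simp: rtrancl_eq_or_trancl trancl_converse)
    then show False
      using maximal that z(2) by (auto intro: rtrancl_trans)
  qed
  then have "z \<in> barren G S"
    using z assms(3) unfolding barren_def desc_def by auto
  then show ?thesis
    using z(2) by blast
qed

lemma anc_barren:
  assumes "finite (dir G)" and "acyclic (dir G)" and "S \<subseteq> verts G"
  shows "anc G (barren G S) = anc G S"
proof
  show "anc G (barren G S) \<subseteq> anc G S"
    by (intro anc_mono barren_subset)
  show "anc G S \<subseteq> anc G (barren G S)"
    unfolding anc_def using exists_barren_descendant[OF assms]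
    by (blast intro: rtrancl_trans)
qed

lemma barren_not_in_pa_anc:
  assumes "acyclic (dir G)" and "S \<subseteq> verts G" and s: "s \<in> barren G S"
  shows "s \<notin> pa G (anc G S)"
proof
  assume "s \<in> pa G (anc G S)"
  then obtain d where sd: "(s, d) \<in> dir G" and "d \<in> anc G S"
    unfolding pa_def by auto
  then obtain h where h: "h \<in> S" and dh: "(d, h) \<in> (dir G)\<^sup>*"
    unfolding anc_def by auto
  have sh: "(s, h) \<in> (dir G)\<^sup>+"
    using sd dh by (rule rtrancl_into_trancl2)
  then have "h \<in> desc G {s} \<inter> S"
    using h assms(2) unfolding desc_def by auto
  then have "h = s"
    using s unfolding barren_def by auto
  then show False
    using sh assms(1) unfolding acyclic_def by auto
qed

definition district_covered :: "'a mgraph \<Rightarrow> 'a set \<Rightarrow> bool" where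
  "district_covered G S \<longleftrightarrow> S \<noteq> {} \<and>
     (\<exists>v. S \<subseteq> district (induced G (anc G S)) v \<union> pa G (district (induced G (anc G S)) v))"

lemma param_set_district_covered:
  assumes "sym (bi G)" and "S \<in> param_sets G"
  shows "district_covered G S"
proof -
  obtain H A where S: "S = H \<union> A" and head: "is_head G H" and A: "A \<subseteq> tail G H"
    using assms(2) unfolding param_sets_def by auto
  then obtain v where "H \<noteq> {}" and H: "H \<subseteq> district (induced G (anc G H)) v"
    unfolding is_head_def by auto
  define D where "D = district (induced G (anc G H)) v"
  have "tail G H = (D - H) \<union> pa G D"
    unfolding tail_def D_def using dis_an_eq_district[OF assms(1) \<open>H \<noteq> {}\<close> H] by simp
  then have "S \<subseteq> D \<union> pa G D"
    using S A H unfolding D_def by auto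
  moreover have "D \<subseteq> district (induced G (anc G S)) v"
    unfolding D_def using S by (intro district_induced_mono anc_mono) auto
  ultimately show ?thesis
    unfolding district_covered_def using S \<open>H \<noteq> {}\<close> pa_mono by blast
qed

lemma district_covered_param_set:
  assumes "sym (bi G)" and "finite (dir G)" and "acyclic (dir G)" and "S \<subseteq> verts G"
    and "district_covered G S"
  shows "S \<in> param_sets G"
proof -
  obtain v where "S \<noteq> {}"
    and S: "S \<subseteq> district (induced G (anc G S)) v \<union> pa G (district (induced G (anc G S)) v)"
    using assms(5) unfolding district_covered_def by blast
  define H where "H = barren G S"
  define D where "D = district (induced G (anc G S)) v"
  have anc_H: "anc G H = anc G S"
    unfolding H_def using anc_barren assms(2-4) by blast
  have "H \<noteq> {}"
    using exists_barren_descendant[OF assms(2-4)] \<open>S \<noteq> {}\<close> unfolding H_def by fast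
  have "pa G D \<subseteq> pa G (anc G S)"
    unfolding D_def using district_subset_verts[of "induced G (anc G S)"] by (intro pa_mono) auto
  then have "H \<subseteq> D"
    using S barren_subset[of G S] barren_not_in_pa_anc[OF assms(3,4)]
    unfolding H_def D_def by blast
  moreover have D_eq: "D = district (induced G (anc G H)) v"
    unfolding D_def anc_H ..
  moreover have "H \<subseteq> verts G" and "barren G H = H"
    using assms(4) barren_subset[of G S] barren_barren[of G S] unfolding H_def by auto
  ultimately have head: "is_head G H"
    using \<open>H \<noteq> {}\<close> unfolding is_head_def by blast
  have dis_an_H: "dis_an G H = D"
    using dis_an_eq_district[OF assms(1) \<open>H \<noteq> {}\<close>] \<open>H \<subseteq> D\<close> D_eq by simp
  have "S - H \<subseteq> tail G H"
    using S unfolding tail_def dis_an_H D_def by auto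
  moreover have "S = H \<union> (S - H)"
    unfolding H_def using barren_subset[of G S] by blast
  ultimately show ?thesis
    unfolding param_sets_def using head by blast
qed

lemma district_covered_subset_verts:
  assumes "dir G \<subseteq> verts G \<times> verts G" and "district_covered G S"
  shows "S \<subseteq> verts G"
proof -
  obtain v where S: "S \<subseteq> district (induced G (anc G S)) v \<union> pa G (district (induced G (anc G S)) v)"
    using assms(2) unfolding district_covered_def by blast
  have "district (induced G (anc G S)) v \<subseteq> verts G"
    using district_subset_verts[of "induced G (anc G S)" v] by simp
  moreover have "pa G (district (induced G (anc G S)) v) \<subseteq> verts G"
    using assms(1) unfolding pa_def by blast
  ultimately show ?thesis
    using S by blast
qed

lemma district_covered_induced:
  assumes "district_covered (induced G W) S"
  shows "district_covered G S"
proof -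
  obtain v where "S \<noteq> {}" and S_cover:
    "S \<subseteq> district (induced G (W \<inter> anc (induced G W) S)) v
          \<union> pa (induced G W) (district (induced G (W \<inter> anc (induced G W) S)) v)"
    using assms unfolding district_covered_def induced_induced by blast
  define D' where "D' = district (induced G (W \<inter> anc (induced G W) S)) v"
  define D where "D = district (induced G (anc G S)) v"
  have "W \<inter> anc (induced G W) S \<subseteq> anc G S"
    using anc_induced_subset[of G W S] by blast
  then have "D' \<subseteq> D"
    unfolding D'_def D_def by (rule district_induced_mono)
  then have "S \<subseteq> D \<union> pa G D"
    using S_cover[folded D'_def] pa_mono[of D' D G] pa_induced_subset[of G W D'] by blast
  then show ?thesis
    unfolding district_covered_def D_def using \<open>S \<noteq> {}\<close> by blast
qed

theorem corollaryB3:
  fixes G :: "'a mgraph" and W :: "'a set"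
  assumes "is_MAG G" and "W \<subseteq> verts G"
  shows "param_sets (induced G W) \<subseteq> param_sets G \<inter> Pow W"
proof
  fix S assume S: "S \<in> param_sets (induced G W)"
  have sym: "sym (bi G)" and acyclic: "acyclic (dir G)"
    and "finite (verts G)" and dir_verts: "dir G \<subseteq> verts G \<times> verts G"
    using assms(1) unfolding is_MAG_def by auto
  then have "finite (dir G)"
    by (meson finite_SigmaI finite_subset)
  have covered: "district_covered (induced G W) S"
    using param_set_district_covered[OF sym_bi_induced[OF sym] S] .
  have "dir (induced G W) \<subseteq> verts (induced G W) \<times> verts (induced G W)"
    using dir_verts by auto
  then have "S \<subseteq> verts G \<inter> W"
    using district_covered_subset_verts[OF _ covered] by simp
  then show "S \<in> param_sets G \<inter> Pow W"
    using district_covered_param_set[OF sym \<open>finite (dir G)\<close> acyclic _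
        district_covered_induced[OF covered]] by blast
qed

end
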